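(* If $G$ is a graph on $n$ vertices with independence number $\alpha\geq 1$, then $\operatorname{th}_{\operatorname{H}}(G)\leq\lceil n-\alpha+2\sqrt{\alpha}-1\rceil$.
   Context: All graphs are finite, simple and undirected. Hopping color change rule: a blue vertex $v$ may force a white vertex $w$ to become blue if $v$ has not previously performed a force and every neighbor of $v$ is blue. For an initial blue set $B$, a chronological list of forces of $B$ is a sequence of such forces applied one at a time until no further force is possible; its underlying unordered set is a set of forces of $B$. $B$ is a hopping forcing set if some chronological list of forces of $B$ turns all vertices blue. For a set of forces $\mathcal F$ of $B$, let $\mathcal F^{(0)}=B$ and for $t\geq1$ let $\mathcal F^{(t)}$ be the set of vertices $w\notin U_{t-1}:=\bigcup_{i=0}^{t-1}\mathcal F^{(i)}$ for which there is $(v\to w)\in\mathcal F$ with $v\in U_{t-1}$ and all neighbors of $v$ in $U_{t-1}$. $\operatorname{pt}_{\operatorname{H}}(G;\mathcal F)$ is the least $t$ with $\bigcup_{i=0}^t\mathcal F^{(i)}=V(G)$ ($\infty$ if none); $\operatorname{pt}_{\operatorname{H}}(G;B)$ is the minimum of $\operatorname{pt}_{\operatorname{H}}(G;\mathcal F)$ over sets of forces $\mathcal F$ of $B$ ($\infty$ if $B$ is not a hopping forcing set). $\operatorname{th}_{\operatorname{H}}(G)=\min_{B\subseteq V(G)}\big(|B|+\operatorname{pt}_{\operatorname{H}}(G;B)\big)$. *)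

theory Defs
  imports Complex_Main "HOL-Library.Extended_Nat"
begin

definition simple_graph :: "'a set \<Rightarrow> ('a \<Rightarrow> 'a \<Rightarrow> bool) \<Rightarrow> bool" where
  "simple_graph V E \<longleftrightarrow> finite V \<and> (\<forall>u v. E u v \<longrightarrow> u \<in> V \<and> v \<in> V)
     \<and> (\<forall>u v. E u v \<longrightarrow> E v u) \<and> (\<forall>v. \<not> E v v)"

definition nbhd :: "'a set \<Rightarrow> ('a \<Rightarrow> 'a \<Rightarrow> bool) \<Rightarrow> 'a \<Rightarrow> 'a set" where
  "nbhd V E v = {u \<in> V. E v u}"

definition independent_set :: "'a set \<Rightarrow> ('a \<Rightarrow> 'a \<Rightarrow> bool) \<Rightarrow> 'a set \<Rightarrow> bool" where
  "independent_set V E S \<longleftrightarrow> S \<subseteq> V \<and> (\<forall>u\<in>S. \<forall>v\<in>S. \<not> E u v)"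

definition independence_number :: "'a set \<Rightarrow> ('a \<Rightarrow> 'a \<Rightarrow> bool) \<Rightarrow> nat" where
  "independence_number V E = Max (card ` {S. independent_set V E S})"

definition hop_valid :: "'a set \<Rightarrow> ('a \<Rightarrow> 'a \<Rightarrow> bool) \<Rightarrow> 'a set \<Rightarrow> ('a \<times> 'a) list \<Rightarrow> 'a \<times> 'a \<Rightarrow> bool" where
  "hop_valid V E B fs f \<longleftrightarrow>
     (let S = B \<union> snd ` set fs in
      fst f \<in> S \<and> snd f \<in> V \<and> snd f \<notin> S \<and> fst f \<notin> fst ` set fs \<and> nbhd V E (fst f) \<subseteq> S)"

definition hop_chron_list :: "'a set \<Rightarrow> ('a \<Rightarrow> 'a \<Rightarrow> bool) \<Rightarrow> 'a set \<Rightarrow> ('a \<times> 'a) list \<Rightarrow> bool" where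
  "hop_chron_list V E B fs \<longleftrightarrow>
     (\<forall>i < length fs. hop_valid V E B (take i fs) (fs ! i)) \<and> \<not> (\<exists>f. hop_valid V E B fs f)"

definition hop_force_set :: "'a set \<Rightarrow> ('a \<Rightarrow> 'a \<Rightarrow> bool) \<Rightarrow> 'a set \<Rightarrow> ('a \<times> 'a) set \<Rightarrow> bool" where
  "hop_force_set V E B F \<longleftrightarrow> (\<exists>fs. hop_chron_list V E B fs \<and> F = set fs)"

definition hopping_forcing_set :: "'a set \<Rightarrow> ('a \<Rightarrow> 'a \<Rightarrow> bool) \<Rightarrow> 'a set \<Rightarrow> bool" where
  "hopping_forcing_set V E B \<longleftrightarrow> B \<subseteq> V \<and>
     (\<exists>fs. hop_chron_list V E B fs \<and> B \<union> snd ` set fs = V)"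

fun hop_blue :: "'a set \<Rightarrow> ('a \<Rightarrow> 'a \<Rightarrow> bool) \<Rightarrow> 'a set \<Rightarrow> ('a \<times> 'a) set \<Rightarrow> nat \<Rightarrow> 'a set" where
  "hop_blue V E B F 0 = B"
| "hop_blue V E B F (Suc t) = hop_blue V E B F t \<union>
     {w. w \<notin> hop_blue V E B F t \<and> (\<exists>v. (v, w) \<in> F \<and> v \<in> hop_blue V E B F t
            \<and> nbhd V E v \<subseteq> hop_blue V E B F t)}"

definition pt_H_forces :: "'a set \<Rightarrow> ('a \<Rightarrow> 'a \<Rightarrow> bool) \<Rightarrow> 'a set \<Rightarrow> ('a \<times> 'a) set \<Rightarrow> enat" where
  "pt_H_forces V E B F =
     (if \<exists>t. hop_blue V E B F t = V then enat (LEAST t. hop_blue V E B F t = V) else \<infinity>)"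

definition pt_H :: "'a set \<Rightarrow> ('a \<Rightarrow> 'a \<Rightarrow> bool) \<Rightarrow> 'a set \<Rightarrow> enat" where
  "pt_H V E B =
     (if hopping_forcing_set V E B then (INF F \<in> {F. hop_force_set V E B F}. pt_H_forces V E B F)
      else \<infinity>)"

definition th_H :: "'a set \<Rightarrow> ('a \<Rightarrow> 'a \<Rightarrow> bool) \<Rightarrow> enat" where
  "th_H V E = (INF B \<in> Pow V. enat (card B) + pt_H V E B)"

end

theory Submission
  imports Defs
begin

text \<open>Take a maximum independent set listed as \<open>s\<^sub>0, \<dots>, s\<^sub>a\<^sub>-\<^sub>1\<close> and colour blue all
  vertices outside it together with \<open>s\<^sub>0, \<dots>, s\<^sub>k\<^sub>-\<^sub>1\<close>. Every \<open>s\<^sub>i\<close> has all its neighbours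
  outside the independent set, so \<open>s\<^sub>i\<close> may hop-force \<open>s\<^sub>i\<^sub>+\<^sub>k\<close> as soon as it is blue: each round
  turns the next \<open>k\<close> vertices of the list blue, and \<open>T\<close> rounds suffice once \<open>a \<le> k (T + 1)\<close>.
  This gives \<open>th\<^sub>H(G) \<le> n - a + k + T\<close>, and choosing \<open>k\<close> and \<open>T + 1\<close> as the two halves of
  \<open>\<lceil>2\<surd>a\<rceil>\<close> yields the bound.\<close>

lemma hop_blue_subset:
  assumes "B \<subseteq> V" "snd ` F \<subseteq> V"
  shows "hop_blue V E B F t \<subseteq> V"
  using assms by (induction t) (auto simp: image_subset_iff)

lemma forced_in_hop_blue_Suc:
  assumes "(v, w) \<in> F" "v \<in> hop_blue V E B F t" "nbhd V E v \<subseteq> hop_blue V E B F t"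
  shows "w \<in> hop_blue V E B F (Suc t)"
  using assms by auto

lemma th_H_le_card_add_rounds:
  assumes chron: "hop_chron_list V E B fs" and all_blue: "B \<union> snd ` set fs = V"
    and rounds: "V \<subseteq> hop_blue V E B (set fs) T"
  shows "th_H V E \<le> enat (card B + T)"
proof -
  have "B \<subseteq> V" "snd ` set fs \<subseteq> V"
    using all_blue by auto
  then have "hop_blue V E B (set fs) T = V"
    using hop_blue_subset[of B V "set fs" E T] rounds by blast
  then have "pt_H_forces V E B (set fs) \<le> enat T"
    unfolding pt_H_forces_def by (auto intro: Least_le)
  moreover have "hopping_forcing_set V E B"
    unfolding hopping_forcing_set_def using \<open>B \<subseteq> V\<close> chron all_blue by blast
  moreover have "hop_force_set V E B (set fs)"
    unfolding hop_force_set_def using chron by blast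
  ultimately have "pt_H V E B \<le> enat T"
    unfolding pt_H_def by (simp add: INF_lower2)
  have "th_H V E \<le> enat (card B) + pt_H V E B"
    unfolding th_H_def using \<open>B \<subseteq> V\<close> by (auto intro: INF_lower)
  also have "\<dots> \<le> enat (card B) + enat T"
    using \<open>pt_H V E B \<le> enat T\<close> by (rule add_left_mono)
  finally show ?thesis
    by simp
qed

lemma nbhd_subset_Diff_independent_set:
  assumes "independent_set V E S" "s \<in> S"
  shows "nbhd V E s \<subseteq> V - S"
  using assms unfolding independent_set_def nbhd_def by blast

lemma nth_notin_set_take:
  assumes "distinct xs" "j < length xs"
  shows "xs ! j \<notin> set (take j xs)"
proof -
  have "xs ! j \<in> set (drop j xs)"
    using assms(2) by (metis Cons_nth_drop_Suc list.set_intros(1))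
  then show ?thesis
    using set_take_disj_set_drop_if_distinct[OF assms(1), of j j] by blast
qed

lemma nth_in_set_take:
  assumes "i < j" "i < length xs"
  shows "xs ! i \<in> set (take j xs)"
  using assms by (metis length_take min_less_iff_conj nth_mem nth_take)

lemma hop_chron_list_shift:
  assumes indep: "independent_set V E (set ss)" and "distinct ss" and "1 \<le> k"
  defines "B \<equiv> (V - set ss) \<union> set (take k ss)" and "fs \<equiv> zip ss (drop k ss)"
  shows "hop_chron_list V E B fs" and "B \<union> snd ` set fs = V"
proof -
  let ?n = "length ss"
  have blue: "B \<union> snd ` set (take i fs) = (V - set ss) \<union> set (take (k + i) ss)"
    if "i \<le> ?n - k" for i
  proof -
    have "snd ` set (take i fs) = set (take i (drop k ss))"
      using that unfolding fs_def take_zip set_map[symmetric] map_snd_zip_take by simp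
    then show ?thesis
      unfolding B_def take_add by auto
  qed
  have forced: "fst ` set (take i fs) = set (take i ss)" if "i \<le> ?n - k" for i
    using that unfolding fs_def take_zip set_map[symmetric] map_fst_zip_take by simp
  have "take (?n - k) fs = fs"
    unfolding fs_def by simp
  moreover have "set ss \<subseteq> V"
    using indep unfolding independent_set_def by blast
  ultimately show all_blue: "B \<union> snd ` set fs = V"
    using blue[of "?n - k"] by (cases "k \<le> ?n") auto
  show "hop_chron_list V E B fs"
    unfolding hop_chron_list_def
  proof (intro conjI allI impI)
    fix i
    assume "i < length fs"
    then have i: "i < ?n - k"
      unfolding fs_def by simp
    have "fs ! i = (ss ! i, ss ! (k + i))"
      using i unfolding fs_def by simp
    moreover have "ss ! i \<in> set (take (k + i) ss)"
      using i \<open>1 \<le> k\<close> by (intro nth_in_set_take) auto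
    moreover have "ss ! i \<notin> set (take i ss)" "ss ! (k + i) \<notin> set (take (k + i) ss)"
      using i nth_notin_set_take[OF \<open>distinct ss\<close>] by simp_all
    moreover have "ss ! (k + i) \<in> set ss" "nbhd V E (ss ! i) \<subseteq> V - set ss"
      using i nbhd_subset_Diff_independent_set[OF indep] by auto
    ultimately show "hop_valid V E B (take i fs) (fs ! i)"
      using i blue[of i] forced[of i] \<open>set ss \<subseteq> V\<close> unfolding hop_valid_def Let_def by auto
  next
    show "\<not> (\<exists>f. hop_valid V E B fs f)"
      unfolding hop_valid_def Let_def all_blue by auto
  qed
qed

lemma hop_blue_shift:
  assumes indep: "independent_set V E (set ss)" and "1 \<le> k"
  defines "B \<equiv> (V - set ss) \<union> set (take k ss)" and "F \<equiv> set (zip ss (drop k ss))"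
  shows "(V - set ss) \<union> set (take (k * (t + 1)) ss) \<subseteq> hop_blue V E B F t"
proof (induction t)
  case 0
  then show ?case
    unfolding B_def by simp
next
  case (Suc t)
  show ?case
  proof
    fix x
    assume x: "x \<in> (V - set ss) \<union> set (take (k * (Suc t + 1)) ss)"
    show "x \<in> hop_blue V E B F (Suc t)"
    proof (cases "x \<in> (V - set ss) \<union> set (take (k * (t + 1)) ss)")
      case True
      then show ?thesis
        using Suc.IH by auto
    next
      case False
      with x have "x \<in> set (take (k * (t + 2)) ss)"
        by auto
      then obtain j where j: "j < length ss" "j < k * (t + 2)" "x = ss ! j"
        by (auto simp: in_set_conv_nth)
      have "k * (t + 1) \<le> j"
        using False j nth_in_set_take[of j "k * (t + 1)" ss] by force
      define i where "i = j - k"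
      have i: "j = k + i" "i < length ss - k" "i < k * (t + 1)"
        using j \<open>k * (t + 1) \<le> j\<close> \<open>1 \<le> k\<close> unfolding i_def by (auto simp: algebra_simps)
      have "(ss ! i, x) \<in> F"
        using i j unfolding F_def by (auto simp: in_set_conv_nth intro!: exI[of _ i])
      moreover have "ss ! i \<in> hop_blue V E B F t"
        using Suc.IH i nth_in_set_take[of i "k * (t + 1)" ss] by auto
      moreover have "nbhd V E (ss ! i) \<subseteq> hop_blue V E B F t"
        using Suc.IH i nbhd_subset_Diff_independent_set[OF indep] by force
      ultimately show ?thesis
        by (rule forced_in_hop_blue_Suc)
    qed
  qed
qed

lemma th_H_le_independent_set:
  assumes "finite V" and indep: "independent_set V E S"
    and "1 \<le> k" "k \<le> card S" "card S \<le> k * (T + 1)"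
  shows "th_H V E \<le> enat (card V - card S + k + T)"
proof -
  have "S \<subseteq> V"
    using indep unfolding independent_set_def by blast
  then obtain ss where ss: "set ss = S" "distinct ss"
    using \<open>finite V\<close> finite_distinct_list finite_subset by metis
  then have len: "length ss = card S"
    by (metis distinct_card)
  define B where "B = (V - S) \<union> set (take k ss)"
  define fs where "fs = zip ss (drop k ss)"
  have "card B = card V - card S + k"
  proof -
    have "card (set (take k ss)) = k"
      using ss len \<open>k \<le> card S\<close> by (simp add: distinct_card)
    moreover have "(V - S) \<inter> set (take k ss) = {}"
      using ss set_take_subset by fastforce
    ultimately show ?thesis
      unfolding B_def using \<open>finite V\<close> \<open>S \<subseteq> V\<close>
      by (simp add: card_Un_disjoint card_Diff_subset finite_subset)
  qed
  moreover have "V \<subseteq> hop_blue V E B (set fs) T"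
    using hop_blue_shift[of V E ss k T] indep ss len \<open>1 \<le> k\<close> \<open>S \<subseteq> V\<close> \<open>card S \<le> k * (T + 1)\<close>
    unfolding B_def fs_def by auto
  ultimately show ?thesis
    using th_H_le_card_add_rounds hop_chron_list_shift[of V E ss k] indep ss \<open>1 \<le> k\<close>
    unfolding B_def fs_def by (metis add.assoc)
qed

lemma exists_factors_le_two_sqrt:
  fixes a :: nat
  assumes "1 \<le> a"
  shows "\<exists>k m. 1 \<le> k \<and> k \<le> a \<and> a \<le> k * m \<and> real (k + m) < 2 * sqrt (real a) + 1"
proof -
  define c where "c = nat \<lceil>2 * sqrt (real a)\<rceil>"
  define k where "k = c div 2"
  have "real c = of_int \<lceil>2 * sqrt (real a)\<rceil>"
    unfolding c_def by (simp add: of_nat_nat)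
  then have c_bounds: "2 * sqrt (real a) \<le> real c" "real c < 2 * sqrt (real a) + 1"
    by linarith+
  have "(2 * sqrt (real a))\<^sup>2 \<le> (real c)\<^sup>2"
    using c_bounds(1) by (intro power_mono) simp_all
  then have "4 * a \<le> c * c"
    by (simp add: power2_eq_square) (metis of_nat_le_iff of_nat_mult of_nat_numeral)
  moreover have "c * c \<le> 4 * (k * (c - k)) + 1"
    unfolding k_def by (cases "even c") (auto elim!: evenE oddE simp: algebra_simps)
  ultimately have "a \<le> k * (c - k)"
    by linarith
  moreover have "sqrt (real a) \<le> real a"
  proof -
    have "1 \<le> sqrt (real a)"
      using assms by simp
    then have "sqrt (real a) * 1 \<le> sqrt (real a) * sqrt (real a)"
      by (intro mult_left_mono) auto
    then show ?thesis
      by simp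
  qed
  \<comment> \<open>\<open>k \<le> c / 2 < \<surd>a + 1/2 \<le> a + 1/2\<close>\<close>
  then have "k \<le> a"
    using c_bounds(2) unfolding k_def by linarith
  moreover have "1 \<le> k"
    using calculation assms by (cases k) auto
  moreover have "real (k + (c - k)) < 2 * sqrt (real a) + 1"
    using c_bounds(2) unfolding k_def by simp
  ultimately show ?thesis
    by blast
qed

lemma independence_number_attained:
  assumes "finite V"
  obtains S where "independent_set V E S" "card S = independence_number V E"
proof -
  have "{S. independent_set V E S} \<subseteq> Pow V"
    unfolding independent_set_def by blast
  then have "finite (card ` {S. independent_set V E S})"
    using assms finite_subset by blast
  moreover have "independent_set V E {}"
    unfolding independent_set_def by blast
  ultimately have "independence_number V E \<in> card ` {S. independent_set V E S}"
    unfolding independence_number_def by (intro Max_in) auto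
  then show ?thesis
    using that by auto
qed

theorem proposition3p10:
  fixes V :: "'a set" and E :: "'a \<Rightarrow> 'a \<Rightarrow> bool"
  assumes "simple_graph V E"
    and "independence_number V E \<ge> 1"
  shows "th_H V E \<le> enat (nat \<lceil>real (card V) - real (independence_number V E)
            + 2 * sqrt (real (independence_number V E)) - 1\<rceil>)"
proof -
  define a where "a = independence_number V E"
  have "finite V"
    using assms(1) unfolding simple_graph_def by blast
  then obtain S where S: "independent_set V E S" "card S = a"
    using independence_number_attained unfolding a_def by blast
  have "a \<le> card V"
    using S \<open>finite V\<close> card_mono unfolding independent_set_def by metis
  obtain k m where km: "1 \<le> k" "k \<le> a" "a \<le> k * m" "real (k + m) < 2 * sqrt (real a) + 1"
    using exists_factors_le_two_sqrt assms(2) unfolding a_def by blast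
  then have "1 \<le> m"
    using assms(2) unfolding a_def by (cases m) auto
  then have "th_H V E \<le> enat (card V - a + k + (m - 1))"
    using th_H_le_independent_set[OF \<open>finite V\<close> S(1) km(1), of "m - 1"] S(2) km(2,3) by simp
  also have "\<dots> \<le> enat (nat \<lceil>real (card V) - real a + 2 * sqrt (real a) - 1\<rceil>)"
  proof -
    have "real (card V - a + k + (m - 1)) = real (card V) - real a + real (k + m) - 1"
      using \<open>a \<le> card V\<close> \<open>1 \<le> m\<close> by (simp add: of_nat_diff)
    then have "int (card V - a + k + (m - 1)) \<le> \<lceil>real (card V) - real a + 2 * sqrt (real a) - 1\<rceil>"
      unfolding le_ceiling_iff using km(4) by simp
    then show ?thesis
      by (metis enat_ord_simps(1) nat_int nat_mono)
  qed
  finally show ?thesis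
    unfolding a_def .
qed

end
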